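(* Let $\gamma>0$ and $s>0$, let $G(u,v;s)=(u^2+v^2)^{-s}$ and $D_1=\partial/\partial u$. Define polynomials $P_j(u,v;s)$ by $P_1(u,v;s)=-2su$ and $P_{j+1}(u,v;s)=(u^2+v^2)\,\partial_uP_j(u,v;s)-2(s+j)uP_j(u,v;s)$. Then for $u\ge\gamma$, $v\in\mathbb R$ and $j\ge1$, $$\frac{D_1^jG(u,v;s)}{G(u,v;s)}=\frac{P_j(u,v;s)}{(u^2+v^2)^j},$$ and the following estimates hold for all $u\ge\gamma$, $v\in\mathbb R$: $$-\frac{2s}{\gamma}\le\frac{D_1G}{G}<0,\qquad -\frac{s}{4\gamma^2(s+1)}\le\frac{D_1^2G}{G}\le\frac{2s(2s+1)}{\gamma^2},$$ $$-\frac{2s(2s+1)(2s+2)}{\gamma^3}\le\frac{D_1^3G}{G}\le\frac{2s(2s+2)}{\gamma^3(s+2)^2},\qquad -\frac{2s(s+1)(2s+2)\cdot3}{\gamma^4}\le\frac{D_1^4G}{G}\le\frac{2s(2s+1)(2s+2)(2s+3)}{\gamma^4},$$ where $G$ and its derivatives are evaluated at $(u,v;s)$.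
   Context: In particular $P_2=2s(2s+1)u^2-2sv^2$, $P_3=-2s(2s+1)(2s+2)u^3+3(2s)(2s+2)uv^2$, $P_4=(2s)(2s+2)[(2s+1)(2s+3)u^4-6(2s+3)u^2v^2+3v^4]$. *)

theory Defs
  imports "HOL-Analysis.Analysis" "HOL-Computational_Algebra.Polynomial"
begin

definition Gfun :: "real \<Rightarrow> real \<Rightarrow> real \<Rightarrow> real" where
  "Gfun v s u = (u\<^sup>2 + v\<^sup>2) powr (- s)"

text \<open>P_j(u,v;s) as a polynomial in u whose coefficients depend on v and s.
  P_1 = -2 s u, P_(j+1) = (u^2+v^2) dP_j/du - 2(s+j) u P_j.  Index 0 is unused.\<close>
fun Ppoly :: "real \<Rightarrow> real \<Rightarrow> nat \<Rightarrow> real poly" where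
  "Ppoly v s 0 = 0"
| "Ppoly v s (Suc 0) = [:0, -2 * s:]"
| "Ppoly v s (Suc (Suc j)) =
     [:v\<^sup>2, 0, 1:] * pderiv (Ppoly v s (Suc j))
     - smult (2 * (s + real (Suc j))) [:0, 1:] * Ppoly v s (Suc j)"

end

theory Submission
  imports Defs
begin

text \<open>By induction, \<open>D\<^sub>1\<^sup>j G = P\<^sub>j \<cdot> (u\<^sup>2+v\<^sup>2) powr (-s-j)\<close>: differentiating
  \<open>p \<cdot> w powr a\<close> with \<open>w = u\<^sup>2+v\<^sup>2\<close> gives \<open>w powr (a-1) \<cdot> (w p' + 2 a u p)\<close>, which is exactly the
  recursion defining \<open>P\<^sub>j\<close>. Dividing by \<open>G\<close> leaves \<open>P\<^sub>j / w\<^sup>j\<close>. For \<open>j \<le> 4\<close> this is a rational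
  function of \<open>a = u\<^sup>2\<close> and \<open>b = v\<^sup>2\<close>; each bound is first proved at \<open>\<gamma> = u\<close>, where it reduces to a
  polynomial inequality in \<open>a, b\<close> (a square, or a polynomial with nonnegative coefficients),
  and then weakened using \<open>u \<ge> \<gamma>\<close>.\<close>

lemma has_field_derivative_poly_times_powr:
  fixes x v a :: real and p :: "real poly"
  assumes "x\<^sup>2 + v\<^sup>2 > 0"
  shows "((\<lambda>y. poly p y * (y\<^sup>2 + v\<^sup>2) powr a) has_field_derivative
           (x\<^sup>2 + v\<^sup>2) powr (a - 1) * ((x\<^sup>2 + v\<^sup>2) * poly (pderiv p) x + 2 * a * x * poly p x))
         (at x)"
proof -
  have "((\<lambda>y. y\<^sup>2 + v\<^sup>2) has_field_derivative 2 * x) (at x)"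
    by (auto intro!: derivative_eq_intros)
  note powr_deriv = DERIV_fun_powr[OF this assms, of a]
  have "((\<lambda>y. poly p y * (y\<^sup>2 + v\<^sup>2) powr a) has_field_derivative
          poly (pderiv p) x * (x\<^sup>2 + v\<^sup>2) powr a + poly p x * (a * (x\<^sup>2 + v\<^sup>2) powr (a - 1) * (2 * x)))
        (at x)"
    using DERIV_mult[OF poly_DERIV powr_deriv, of p] by (simp add: mult_ac)
  moreover have "(x\<^sup>2 + v\<^sup>2) powr a = (x\<^sup>2 + v\<^sup>2) powr (a - 1) * (x\<^sup>2 + v\<^sup>2)"
    using assms by (simp add: powr_diff)
  ultimately show ?thesis
    by (simp add: algebra_simps)
qed

lemma higher_deriv_Gfun:
  fixes x v s :: real
  assumes "x > 0"
  shows "(deriv ^^ Suc k) (Gfun v s) x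
           = poly (Ppoly v s (Suc k)) x * (x\<^sup>2 + v\<^sup>2) powr (- s - real (Suc k))"
  using assms
proof (induction k arbitrary: x)
  case 0
  have "Gfun v s = (\<lambda>y. poly [:1:] y * (y\<^sup>2 + v\<^sup>2) powr (- s))"
    by (simp add: Gfun_def fun_eq_iff)
  with has_field_derivative_poly_times_powr[of x v "[:1:]" "- s"] 0
  have "deriv (Gfun v s) x = (x\<^sup>2 + v\<^sup>2) powr (- s - 1) * (- 2 * s * x)"
    by (intro DERIV_imp_deriv) (simp add: add_pos_nonneg)
  then show ?case
    by (simp add: algebra_simps)
next
  case (Suc k)
  let ?P = "Ppoly v s (Suc k)" and ?a = "- s - real (Suc k)"
  have "((deriv ^^ Suc k) (Gfun v s) has_field_derivative
          (x\<^sup>2 + v\<^sup>2) powr (?a - 1) * ((x\<^sup>2 + v\<^sup>2) * poly (pderiv ?P) x + 2 * ?a * x * poly ?P x))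
        (at x)"
    using Suc
    by (intro has_field_derivative_transform_within_open
          [OF has_field_derivative_poly_times_powr, where S = "{0<..}"])
       (auto simp: add_pos_nonneg)
  from DERIV_imp_deriv[OF this] show ?case
    by (simp add: algebra_simps power2_eq_square)
qed

lemma Gfun_higher_deriv_quotient:
  fixes u v s :: real
  assumes "u > 0" and "j \<ge> 1"
  shows "(deriv ^^ j) (Gfun v s) u / Gfun v s u = poly (Ppoly v s j) u / (u\<^sup>2 + v\<^sup>2) ^ j"
proof -
  obtain k where j: "j = Suc k"
    using assms(2) by (cases j) auto
  have w: "u\<^sup>2 + v\<^sup>2 > 0"
    using assms(1) by (simp add: add_pos_nonneg)
  have "(u\<^sup>2 + v\<^sup>2) powr (- s - real j) / (u\<^sup>2 + v\<^sup>2) powr (- s) = (u\<^sup>2 + v\<^sup>2) powr (- real j)"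
    by (simp add: powr_diff [symmetric])
  also have "\<dots> = 1 / (u\<^sup>2 + v\<^sup>2) ^ j"
    using w by (simp add: powr_minus powr_realpow divide_inverse)
  finally show ?thesis
    using higher_deriv_Gfun[OF assms(1), of k v s] unfolding j Gfun_def
    by (metis j times_divide_eq_right mult.right_neutral)
qed

lemma poly_Ppoly_2: "poly (Ppoly v s 2) u = 2 * s * (2 * s + 1) * u\<^sup>2 - 2 * s * v\<^sup>2"
  by (simp add: numeral_2_eq_2 pderiv_pCons algebra_simps power2_eq_square)

lemma poly_Ppoly_3:
  "poly (Ppoly v s 3) u = - 2 * s * (2 * s + 1) * (2 * s + 2) * u ^ 3 + 3 * (2 * s) * (2 * s + 2) * u * v\<^sup>2"
  by (simp add: numeral_3_eq_3 pderiv_pCons pderiv_add pderiv_diff pderiv_smult pderiv_mult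
      algebra_simps power2_eq_square power3_eq_cube)

lemma poly_Ppoly_4:
  "poly (Ppoly v s 4) u
     = 2 * s * (2 * s + 2) * ((2 * s + 1) * (2 * s + 3) * u ^ 4 - 6 * (2 * s + 3) * u\<^sup>2 * v\<^sup>2 + 3 * v ^ 4)"
  by (simp add: eval_nat_numeral pderiv_pCons pderiv_add pderiv_diff pderiv_smult pderiv_mult
      algebra_simps power2_eq_square power3_eq_cube)

lemma Ppoly_1_quotient_bounds:
  fixes g s u v :: real
  assumes "0 < g" "g \<le> u" "s > 0"
  shows "- 2 * s / g \<le> poly (Ppoly v s 1) u / (u\<^sup>2 + v\<^sup>2) ^ 1"
    and "poly (Ppoly v s 1) u / (u\<^sup>2 + v\<^sup>2) ^ 1 < 0"
proof -
  define w where "w = u\<^sup>2 + v\<^sup>2"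
  have u: "u > 0" and w: "u\<^sup>2 \<le> w" "w > 0"
    using assms by (auto simp: w_def add_pos_nonneg)
  have "u / w \<le> 1 / u"
    using u w by (simp add: divide_simps power2_eq_square)
  also have "\<dots> \<le> 1 / g"
    using assms u by (simp add: divide_simps)
  finally have "2 * s * (u / w) \<le> 2 * s * (1 / g)"
    using assms(3) by (intro mult_left_mono) auto
  then show "- 2 * s / g \<le> poly (Ppoly v s 1) u / (u\<^sup>2 + v\<^sup>2) ^ 1"
    by (simp add: w_def mult_ac)
  show "poly (Ppoly v s 1) u / (u\<^sup>2 + v\<^sup>2) ^ 1 < 0"
    using assms(3) u w by (simp add: w_def divide_neg_pos)
qed

lemma Ppoly_2_quotient_bounds:
  fixes g s u v :: real
  assumes "0 < g" "g \<le> u" "s > 0"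
  shows "- s / (4 * g\<^sup>2 * (s + 1)) \<le> poly (Ppoly v s 2) u / (u\<^sup>2 + v\<^sup>2) ^ 2"
    and "poly (Ppoly v s 2) u / (u\<^sup>2 + v\<^sup>2) ^ 2 \<le> 2 * s * (2 * s + 1) / g\<^sup>2"
proof -
  define w where "w = u\<^sup>2 + v\<^sup>2"
  have u: "u > 0" and w: "u\<^sup>2 \<le> w" "w > 0"
    using assms by (auto simp: w_def add_pos_nonneg)
  have gu: "g\<^sup>2 \<le> u\<^sup>2"
    using assms by (simp add: power_mono)
  have P2: "poly (Ppoly v s 2) u = 2 * s * ((2 * s + 2) * u\<^sup>2 - w)"
    by (simp add: poly_Ppoly_2 w_def algebra_simps)
  \<comment> \<open>completing the square in \<open>1/w\<close>\<close>
  have square: "0 \<le> s * (4 * (s + 1) * u\<^sup>2 - w)\<^sup>2"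
    using assms(3) by simp
  have "- s / (4 * u\<^sup>2 * (s + 1)) \<le> 2 * s * ((2 * s + 2) * u\<^sup>2 - w) / w\<^sup>2"
    using w u assms(3) by (simp add: divide_simps)
      (use square in \<open>simp add: algebra_simps power2_eq_square\<close>)
  moreover have "- s / (4 * g\<^sup>2 * (s + 1)) \<le> - s / (4 * u\<^sup>2 * (s + 1))"
    using gu assms by (simp add: divide_simps)
  ultimately show "- s / (4 * g\<^sup>2 * (s + 1)) \<le> poly (Ppoly v s 2) u / (u\<^sup>2 + v\<^sup>2) ^ 2"
    by (simp add: P2 w_def)
  have "poly (Ppoly v s 2) u / w\<^sup>2 \<le> 2 * s * (2 * s + 1) * u\<^sup>2 / w\<^sup>2"
    using assms(3) w by (simp add: poly_Ppoly_2 divide_right_mono)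
  also have "\<dots> \<le> 2 * s * (2 * s + 1) * u\<^sup>2 / (u\<^sup>2)\<^sup>2"
    using assms(3) w u by (intro divide_left_mono power_mono) auto
  also have "\<dots> = 2 * s * (2 * s + 1) / u\<^sup>2"
    using u by (simp add: power2_eq_square)
  also have "\<dots> \<le> 2 * s * (2 * s + 1) / g\<^sup>2"
    using assms gu by (intro divide_left_mono) auto
  finally show "poly (Ppoly v s 2) u / (u\<^sup>2 + v\<^sup>2) ^ 2 \<le> 2 * s * (2 * s + 1) / g\<^sup>2"
    by (simp add: w_def)
qed

lemma Ppoly_3_quotient_bounds:
  fixes g s u v :: real
  assumes "0 < g" "g \<le> u" "s > 0"
  shows "- (2 * s * (2 * s + 1) * (2 * s + 2)) / g ^ 3 \<le> poly (Ppoly v s 3) u / (u\<^sup>2 + v\<^sup>2) ^ 3"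
    and "poly (Ppoly v s 3) u / (u\<^sup>2 + v\<^sup>2) ^ 3 \<le> 2 * s * (2 * s + 2) / (g ^ 3 * (s + 2)\<^sup>2)"
proof -
  define w where "w = u\<^sup>2 + v\<^sup>2"
  define K where "K = 2 * s * (2 * s + 1) * (2 * s + 2)"
  define m where "m = (s + 2) * u\<^sup>2"
  have u: "u > 0" and w: "u\<^sup>2 \<le> w" "w > 0"
    using assms by (auto simp: w_def add_pos_nonneg)
  have gu: "g ^ 3 \<le> u ^ 3"
    using assms by (simp add: power_mono)
  have K: "K > 0" and m: "m > 0"
    using assms(3) u by (simp_all add: K_def m_def)
  have "- K / g ^ 3 \<le> - K / u ^ 3"
    using K gu assms(1) u by (simp add: divide_simps)
  also have "\<dots> = - K * u ^ 3 / (u\<^sup>2) ^ 3"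
    using u by (simp add: divide_simps)
  also have "\<dots> \<le> - K * u ^ 3 / w ^ 3"
    using K u w by (intro divide_left_mono_neg power_mono) auto
  also have "\<dots> \<le> poly (Ppoly v s 3) u / w ^ 3"
    using w assms(3) u unfolding K_def poly_Ppoly_3 by (intro divide_right_mono) auto
  finally show "- (2 * s * (2 * s + 1) * (2 * s + 2)) / g ^ 3 \<le> poly (Ppoly v s 3) u / (u\<^sup>2 + v\<^sup>2) ^ 3"
    by (simp add: K_def w_def)
  \<comment> \<open>AM-GM for \<open>m, m, 3w - 2m\<close>\<close>
  have am_gm: "m\<^sup>2 * (3 * w - 2 * m) \<le> w ^ 3"
  proof -
    have "0 \<le> (w - m)\<^sup>2 * (w + 2 * m)"
      using w m by simp
    then show ?thesis
      by (simp add: algebra_simps power2_eq_square power3_eq_cube)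
  qed
  have "u * (3 * w - 2 * m) * ((s + 2)\<^sup>2 * u ^ 3) = m\<^sup>2 * (3 * w - 2 * m)"
    by (simp add: m_def power2_eq_square power3_eq_cube algebra_simps)
  with am_gm have "u * (3 * w - 2 * m) * ((s + 2)\<^sup>2 * u ^ 3) \<le> w ^ 3"
    by (simp only:)
  then have "u * (3 * w - 2 * m) / w ^ 3 \<le> 1 / ((s + 2)\<^sup>2 * u ^ 3)"
    using w u assms(3) by (simp add: divide_simps)
  also have "\<dots> \<le> 1 / (g ^ 3 * (s + 2)\<^sup>2)"
    using gu assms by (simp add: divide_simps mult.commute)
  finally have "2 * s * (2 * s + 2) * (u * (3 * w - 2 * m) / w ^ 3)
                  \<le> 2 * s * (2 * s + 2) * (1 / (g ^ 3 * (s + 2)\<^sup>2))"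
    using assms(3) by (intro mult_left_mono) auto
  moreover have "poly (Ppoly v s 3) u = 2 * s * (2 * s + 2) * (u * (3 * w - 2 * m))"
    by (simp add: poly_Ppoly_3 m_def w_def algebra_simps power2_eq_square power3_eq_cube)
  ultimately show "poly (Ppoly v s 3) u / (u\<^sup>2 + v\<^sup>2) ^ 3 \<le> 2 * s * (2 * s + 2) / (g ^ 3 * (s + 2)\<^sup>2)"
    by (simp add: w_def)
qed

lemma Ppoly_4_quotient_bounds:
  fixes g s u v :: real
  assumes "0 < g" "g \<le> u" "s > 0"
  shows "- (2 * s * (s + 1) * (2 * s + 2) * 3) / g ^ 4 \<le> poly (Ppoly v s 4) u / (u\<^sup>2 + v\<^sup>2) ^ 4"
    and "poly (Ppoly v s 4) u / (u\<^sup>2 + v\<^sup>2) ^ 4 \<le> 2 * s * (2 * s + 1) * (2 * s + 2) * (2 * s + 3) / g ^ 4"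
proof -
  define a where "a = u\<^sup>2"
  define b where "b = v\<^sup>2"
  define c where "c = 2 * s * (2 * s + 2)"
  define Q where "Q = (2 * s + 1) * (2 * s + 3) * a\<^sup>2 - 6 * (2 * s + 3) * a * b + 3 * b\<^sup>2"
  have a: "a > 0" and b: "b \<ge> 0" and c: "c > 0"
    using assms by (simp_all add: a_def b_def c_def)
  have P4: "poly (Ppoly v s 4) u / (u\<^sup>2 + v\<^sup>2) ^ 4 = c * Q / (a + b) ^ 4"
    by (simp add: poly_Ppoly_4 Q_def c_def a_def b_def power2_eq_square power4_eq_xxxx algebra_simps)
  have ga: "g ^ 4 \<le> a\<^sup>2"
    using assms by (simp add: a_def flip: power_mult)
  have g4: "g ^ 4 > 0"
    using assms(1) by simp
  \<comment> \<open>both differences below are explicit nonnegative combinations of monomials in \<open>a, b\<close>\<close>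
  have "Q * a\<^sup>2 \<le> (2 * s + 1) * (2 * s + 3) * (a + b) ^ 4"
  proof -
    have "0 \<le> (2 * s + 1) * (2 * s + 3) * (4 * a ^ 3 * b + 4 * a * b ^ 3 + b ^ 4)
              + (24 * s\<^sup>2 + 48 * s + 15) * (a\<^sup>2 * b\<^sup>2) + 6 * (2 * s + 3) * (a ^ 3 * b)"
      using a b assms(3) by (intro add_nonneg_nonneg mult_nonneg_nonneg) auto
    then show ?thesis
      by (simp add: Q_def algebra_simps power2_eq_square power3_eq_cube power4_eq_xxxx)
  qed
  then have "c * Q / (a + b) ^ 4 \<le> c * ((2 * s + 1) * (2 * s + 3)) / a\<^sup>2"
    using c a b by (simp add: divide_simps)
  also have "\<dots> \<le> c * ((2 * s + 1) * (2 * s + 3)) / g ^ 4"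
    using c assms(3) ga g4 a by (intro divide_left_mono) auto
  finally show "poly (Ppoly v s 4) u / (u\<^sup>2 + v\<^sup>2) ^ 4 \<le> 2 * s * (2 * s + 1) * (2 * s + 2) * (2 * s + 3) / g ^ 4"
    by (simp add: P4 c_def algebra_simps)
  have "0 \<le> Q * a\<^sup>2 + 3 * (s + 1) * (a + b) ^ 4"
  proof -
    have "0 \<le> (4 * s\<^sup>2 + 11 * s) * a ^ 4 + 6 * a\<^sup>2 * (a - b / 2)\<^sup>2 + (18 * s + 39 / 2) * (a\<^sup>2 * b\<^sup>2)
              + 12 * (s + 1) * (a * b ^ 3) + 3 * (s + 1) * b ^ 4"
      using a b assms(3) by (intro add_nonneg_nonneg mult_nonneg_nonneg) auto
    then show ?thesis
      by (simp add: Q_def algebra_simps power2_eq_square power3_eq_cube power4_eq_xxxx)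
  qed
  then have lower: "- (3 * (s + 1)) / a\<^sup>2 \<le> Q / (a + b) ^ 4"
    using a b by (simp add: divide_simps) (simp add: algebra_simps)
  have nc: "2 * s * (s + 1) * (2 * s + 2) * 3 = c * (3 * (s + 1))"
    by (simp add: c_def algebra_simps)
  have "- (c * (3 * (s + 1))) / g ^ 4 \<le> - (c * (3 * (s + 1))) / a\<^sup>2"
    using c assms(3) ga g4 a by (intro divide_left_mono_neg) auto
  also have "\<dots> = c * (- (3 * (s + 1)) / a\<^sup>2)"
    by (simp add: field_simps)
  also have "\<dots> \<le> c * (Q / (a + b) ^ 4)"
    using c lower by (intro mult_left_mono) auto
  also have "\<dots> = c * Q / (a + b) ^ 4"
    by simp
  finally show "- (2 * s * (s + 1) * (2 * s + 2) * 3) / g ^ 4 \<le> poly (Ppoly v s 4) u / (u\<^sup>2 + v\<^sup>2) ^ 4"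
    unfolding P4 nc .
qed

theorem lemma7p7:
  fixes \<gamma> s :: real
  assumes "\<gamma> > 0" and "s > 0"
  shows "(\<forall>j\<ge>1. \<forall>u v. u \<ge> \<gamma> \<longrightarrow>
            (deriv ^^ j) (Gfun v s) u / Gfun v s u = poly (Ppoly v s j) u / (u\<^sup>2 + v\<^sup>2) ^ j)
       \<and> (\<forall>u v. u \<ge> \<gamma> \<longrightarrow>
            - 2 * s / \<gamma> \<le> deriv (Gfun v s) u / Gfun v s u
          \<and> deriv (Gfun v s) u / Gfun v s u < 0
          \<and> - s / (4 * \<gamma>\<^sup>2 * (s + 1)) \<le> (deriv ^^ 2) (Gfun v s) u / Gfun v s u
          \<and> (deriv ^^ 2) (Gfun v s) u / Gfun v s u \<le> 2 * s * (2 * s + 1) / \<gamma>\<^sup>2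
          \<and> - (2 * s * (2 * s + 1) * (2 * s + 2)) / \<gamma> ^ 3 \<le> (deriv ^^ 3) (Gfun v s) u / Gfun v s u
          \<and> (deriv ^^ 3) (Gfun v s) u / Gfun v s u \<le> 2 * s * (2 * s + 2) / (\<gamma> ^ 3 * (s + 2)\<^sup>2)
          \<and> - (2 * s * (s + 1) * (2 * s + 2) * 3) / \<gamma> ^ 4 \<le> (deriv ^^ 4) (Gfun v s) u / Gfun v s u
          \<and> (deriv ^^ 4) (Gfun v s) u / Gfun v s u
               \<le> 2 * s * (2 * s + 1) * (2 * s + 2) * (2 * s + 3) / \<gamma> ^ 4)"
proof (intro conjI allI impI)
  fix j u v
  assume "j \<ge> (1::nat)" and "u \<ge> \<gamma>"
  with assms show "(deriv ^^ j) (Gfun v s) u / Gfun v s u = poly (Ppoly v s j) u / (u\<^sup>2 + v\<^sup>2) ^ j"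
    by (intro Gfun_higher_deriv_quotient) auto
next
  fix u v
  assume u: "u \<ge> \<gamma>"
  then have "u > 0"
    using assms(1) by linarith
  note quotient = Gfun_higher_deriv_quotient[OF this, of _ v s]
  note bounds = Ppoly_1_quotient_bounds[OF assms(1) u assms(2), of v]
    Ppoly_2_quotient_bounds[OF assms(1) u assms(2), of v]
    Ppoly_3_quotient_bounds[OF assms(1) u assms(2), of v]
    Ppoly_4_quotient_bounds[OF assms(1) u assms(2), of v]
  show "- 2 * s / \<gamma> \<le> deriv (Gfun v s) u / Gfun v s u"
    and "deriv (Gfun v s) u / Gfun v s u < 0"
    using bounds(1,2) quotient[of 1] by simp_all
  show "- s / (4 * \<gamma>\<^sup>2 * (s + 1)) \<le> (deriv ^^ 2) (Gfun v s) u / Gfun v s u"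
    and "(deriv ^^ 2) (Gfun v s) u / Gfun v s u \<le> 2 * s * (2 * s + 1) / \<gamma>\<^sup>2"
    using bounds(3,4) quotient[of 2] by simp_all
  show "- (2 * s * (2 * s + 1) * (2 * s + 2)) / \<gamma> ^ 3 \<le> (deriv ^^ 3) (Gfun v s) u / Gfun v s u"
    and "(deriv ^^ 3) (Gfun v s) u / Gfun v s u \<le> 2 * s * (2 * s + 2) / (\<gamma> ^ 3 * (s + 2)\<^sup>2)"
    using bounds(5,6) quotient[of 3] by simp_all
  show "- (2 * s * (s + 1) * (2 * s + 2) * 3) / \<gamma> ^ 4 \<le> (deriv ^^ 4) (Gfun v s) u / Gfun v s u"
    and "(deriv ^^ 4) (Gfun v s) u / Gfun v s u
           \<le> 2 * s * (2 * s + 1) * (2 * s + 2) * (2 * s + 3) / \<gamma> ^ 4"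
    using bounds(7,8) quotient[of 4] by simp_all
qed

end
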